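(* Let $(X,\rho)$ and $(\tilde X,\tilde\rho)$ be symmetric racks (respectively, symmetric quandles) and let $f:(\tilde X,\tilde\rho)\to(X,\rho)$ be a surjective symmetric rack (respectively, quandle) homomorphism. Let $S=\{S_x\mid x\in X\}$ be a family of sets such that for each $x\in X$ there is a bijection $\mu_x:f^{-1}(x)\to S_x$. Then there is a dynamical cocycle $(\alpha,\beta)$ of $(X,\rho)$ over $S$ such that $(\tilde X,\tilde\rho)$ is isomorphic (as a symmetric rack, respectively quandle) to $\big(X\times_{(\alpha,\beta)}S,\rho_{\alpha,\beta}\big)$.
   Context: A rack is a set $X$ with binary operation $*$ such that each $x\mapsto x*y$ is bijective (inverse $x\mapsto x*^{-1}y$) and $(x*y)*z=(x*z)*(y*z)$; a quandle also satisfies $x*x=x$. A good involution is $\rho:X\to X$ with $\rho^2=\mathrm{id}$, $\rho(x*y)=\rho(x)*y$, $x*\rho(y)=x*^{-1}y$; $(X,\rho)$ is a symmetric rack (quandle). A symmetric rack (quandle) homomorphism $f$ satisfies $f(x*y)=f(x)*f(y)$ and $f\rho=\rho' f$; an isomorphism is a bijective one. A dynamical cocycle of $(X,\rho)$ over $S=\{S_x\}$ consists of maps $\alpha_{x,y}:S_x\times S_y\to S_{x*y}$ and $\beta_x:S_x\to S_{\rho(x)}$ such that for all $x,y,z\in X$, $s\in S_x,t\in S_y,w\in S_z$ (with $\alpha_{x,y}(t)(s):=\alpha_{x,y}(s,t)$): (1) $\alpha_{x,y}(t):S_x\to S_{x*y}$ is bijective; (2) $\alpha_{x*y,z}(\alpha_{x,y}(s,t),w)=\alpha_{x*z,y*z}(\alpha_{x,z}(s,w),\alpha_{y,z}(t,w))$;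 (3) $\alpha_{\rho(x),y}(\beta_x(s),t)=\beta_{x*y}(\alpha_{x,y}(s,t))$; (4) $\beta_{\rho(x)}\beta_x(s)=s$; (5) $\alpha_{x,\rho(y)}(\beta_y(t))(s)=(\alpha_{x*^{-1}y,y}(t))^{-1}(s)$; for symmetric quandles also (6) $\alpha_{x,x}(s,s)=s$. The extension $\big(X\times_{(\alpha,\beta)}S,\rho_{\alpha,\beta}\big)$ is the set $\{(x,s)\mid x\in X,s\in S_x\}$ with $(x,s)*(y,t)=(x*y,\alpha_{x,y}(s,t))$ and $\rho_{\alpha,\beta}(x,s)=(\rho(x),\beta_x(s))$, which is a symmetric rack (quandle). *)

theory Defs
  imports Main
begin

definition rack :: "'a set \<Rightarrow> ('a \<Rightarrow> 'a \<Rightarrow> 'a) \<Rightarrow> bool" where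
  "rack X op \<longleftrightarrow>
     (\<forall>x\<in>X. \<forall>y\<in>X. op x y \<in> X) \<and>
     (\<forall>y\<in>X. bij_betw (\<lambda>x. op x y) X X) \<and>
     (\<forall>x\<in>X. \<forall>y\<in>X. \<forall>z\<in>X. op (op x y) z = op (op x z) (op y z))"

definition quandle :: "'a set \<Rightarrow> ('a \<Rightarrow> 'a \<Rightarrow> 'a) \<Rightarrow> bool" where
  "quandle X op \<longleftrightarrow> rack X op \<and> (\<forall>x\<in>X. op x x = x)"

definition rinv :: "'a set \<Rightarrow> ('a \<Rightarrow> 'a \<Rightarrow> 'a) \<Rightarrow> 'a \<Rightarrow> 'a \<Rightarrow> 'a" where
  "rinv X op x y = the_inv_into X (\<lambda>z. op z y) x"

definition good_involution :: "'a set \<Rightarrow> ('a \<Rightarrow> 'a \<Rightarrow> 'a) \<Rightarrow> ('a \<Rightarrow> 'a) \<Rightarrow> bool" where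
  "good_involution X op \<rho> \<longleftrightarrow>
     (\<forall>x\<in>X. \<rho> x \<in> X) \<and>
     (\<forall>x\<in>X. \<rho> (\<rho> x) = x) \<and>
     (\<forall>x\<in>X. \<forall>y\<in>X. \<rho> (op x y) = op (\<rho> x) y) \<and>
     (\<forall>x\<in>X. \<forall>y\<in>X. op x (\<rho> y) = rinv X op x y)"

definition symmetric_rack :: "'a set \<Rightarrow> ('a \<Rightarrow> 'a \<Rightarrow> 'a) \<Rightarrow> ('a \<Rightarrow> 'a) \<Rightarrow> bool" where
  "symmetric_rack X op \<rho> \<longleftrightarrow> rack X op \<and> good_involution X op \<rho>"

definition symmetric_quandle :: "'a set \<Rightarrow> ('a \<Rightarrow> 'a \<Rightarrow> 'a) \<Rightarrow> ('a \<Rightarrow> 'a) \<Rightarrow> bool" where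
  "symmetric_quandle X op \<rho> \<longleftrightarrow> quandle X op \<and> good_involution X op \<rho>"

definition symmetric_hom ::
  "'b set \<Rightarrow> ('b \<Rightarrow> 'b \<Rightarrow> 'b) \<Rightarrow> ('b \<Rightarrow> 'b) \<Rightarrow>
   'a set \<Rightarrow> ('a \<Rightarrow> 'a \<Rightarrow> 'a) \<Rightarrow> ('a \<Rightarrow> 'a) \<Rightarrow> ('b \<Rightarrow> 'a) \<Rightarrow> bool" where
  "symmetric_hom Y opY \<rho>Y X opX \<rho>X f \<longleftrightarrow>
     (\<forall>a\<in>Y. f a \<in> X) \<and>
     (\<forall>a\<in>Y. \<forall>b\<in>Y. f (opY a b) = opX (f a) (f b)) \<and>
     (\<forall>a\<in>Y. f (\<rho>Y a) = \<rho>X (f a))"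

definition symmetric_iso ::
  "'b set \<Rightarrow> ('b \<Rightarrow> 'b \<Rightarrow> 'b) \<Rightarrow> ('b \<Rightarrow> 'b) \<Rightarrow>
   'a set \<Rightarrow> ('a \<Rightarrow> 'a \<Rightarrow> 'a) \<Rightarrow> ('a \<Rightarrow> 'a) \<Rightarrow> ('b \<Rightarrow> 'a) \<Rightarrow> bool" where
  "symmetric_iso Y opY \<rho>Y X opX \<rho>X f \<longleftrightarrow>
     symmetric_hom Y opY \<rho>Y X opX \<rho>X f \<and> bij_betw f Y X"

text \<open>Dynamical cocycle (\<alpha>,\<beta>) of (X,\<rho>) over S; \<alpha> x y s t = \<alpha>_{x,y}(s,t), \<beta> x s = \<beta>_x(s).
  The flag q selects the quandle version (adding condition (6)).\<close>
definition dynamical_cocycle ::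
  "bool \<Rightarrow> 'a set \<Rightarrow> ('a \<Rightarrow> 'a \<Rightarrow> 'a) \<Rightarrow> ('a \<Rightarrow> 'a) \<Rightarrow> ('a \<Rightarrow> 's set) \<Rightarrow>
   ('a \<Rightarrow> 'a \<Rightarrow> 's \<Rightarrow> 's \<Rightarrow> 's) \<Rightarrow> ('a \<Rightarrow> 's \<Rightarrow> 's) \<Rightarrow> bool" where
  "dynamical_cocycle q X op \<rho> S \<alpha> \<beta> \<longleftrightarrow>
     (\<forall>x\<in>X. \<forall>s\<in>S x. \<beta> x s \<in> S (\<rho> x)) \<and>
     (\<forall>x\<in>X. \<forall>y\<in>X. \<forall>t\<in>S y. bij_betw (\<lambda>s. \<alpha> x y s t) (S x) (S (op x y))) \<and>
     (\<forall>x\<in>X. \<forall>y\<in>X. \<forall>z\<in>X. \<forall>s\<in>S x. \<forall>t\<in>S y. \<forall>w\<in>S z.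
        \<alpha> (op x y) z (\<alpha> x y s t) w = \<alpha> (op x z) (op y z) (\<alpha> x z s w) (\<alpha> y z t w)) \<and>
     (\<forall>x\<in>X. \<forall>y\<in>X. \<forall>s\<in>S x. \<forall>t\<in>S y.
        \<alpha> (\<rho> x) y (\<beta> x s) t = \<beta> (op x y) (\<alpha> x y s t)) \<and>
     (\<forall>x\<in>X. \<forall>s\<in>S x. \<beta> (\<rho> x) (\<beta> x s) = s) \<and>
     (\<forall>x\<in>X. \<forall>y\<in>X. \<forall>s\<in>S x. \<forall>t\<in>S y.
        \<alpha> x (\<rho> y) s (\<beta> y t) =
          the_inv_into (S (rinv X op x y)) (\<lambda>u. \<alpha> (rinv X op x y) y u t) s) \<and>
     (q \<longrightarrow> (\<forall>x\<in>X. \<forall>s\<in>S x. \<alpha> x x s s = s))"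

definition ext_set :: "'a set \<Rightarrow> ('a \<Rightarrow> 's set) \<Rightarrow> ('a \<times> 's) set" where
  "ext_set X S = {(x, s). x \<in> X \<and> s \<in> S x}"

definition ext_op :: "('a \<Rightarrow> 'a \<Rightarrow> 'a) \<Rightarrow> ('a \<Rightarrow> 'a \<Rightarrow> 's \<Rightarrow> 's \<Rightarrow> 's) \<Rightarrow>
    ('a \<times> 's) \<Rightarrow> ('a \<times> 's) \<Rightarrow> ('a \<times> 's)" where
  "ext_op op \<alpha> p r = (op (fst p) (fst r), \<alpha> (fst p) (fst r) (snd p) (snd r))"

definition ext_rho :: "('a \<Rightarrow> 'a) \<Rightarrow> ('a \<Rightarrow> 's \<Rightarrow> 's) \<Rightarrow> ('a \<times> 's) \<Rightarrow> ('a \<times> 's)" where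
  "ext_rho \<rho> \<beta> p = (\<rho> (fst p), \<beta> (fst p) (snd p))"

end

theory Submission
  imports Defs
begin

text \<open>The map a \<mapsto> (f a, \<mu>_(f a) a) is a bijection of Y onto the extension set
  which, f being a homomorphism, preserves first coordinates. Transporting the operation and
  involution of Y along it therefore gives structure maps of the shape ext_op op \<alpha> and
  ext_rho \<rho> \<beta>, and makes the extension a symmetric rack (quandle) isomorphic to Y.
  On the other hand, whenever an extension over a rack is a symmetric rack (quandle),
  (\<alpha>, \<beta>) is a dynamical cocycle: the cocycle axioms are the rack axioms read in the second
  coordinate, and bijectivity of each \<alpha>_{x,y}(t) follows from right cancellation in X.\<close>

lemma rackD:
  assumes "rack X op"
  shows rack_closed: "\<lbrakk>x \<in> X; y \<in> X\<rbrakk> \<Longrightarrow> op x y \<in> X"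
    and rack_bij_right: "y \<in> X \<Longrightarrow> bij_betw (\<lambda>x. op x y) X X"
    and rack_self_distrib: "\<lbrakk>x \<in> X; y \<in> X; z \<in> X\<rbrakk> \<Longrightarrow> op (op x y) z = op (op x z) (op y z)"
  using assms unfolding rack_def by blast+

lemma rack_right_cancel:
  assumes "rack X op" "x \<in> X" "x' \<in> X" "y \<in> X" "op x y = op x' y"
  shows "x = x'"
  using rack_bij_right[OF assms(1,4)] assms(2,3,5) by (auto simp: bij_betw_def inj_on_def)

lemma good_involutionD:
  assumes "good_involution X op \<rho>"
  shows good_involution_closed: "x \<in> X \<Longrightarrow> \<rho> x \<in> X"
    and good_involution_involutive: "x \<in> X \<Longrightarrow> \<rho> (\<rho> x) = x"
    and good_involution_op_left: "\<lbrakk>x \<in> X; y \<in> X\<rbrakk> \<Longrightarrow> \<rho> (op x y) = op (\<rho> x) y"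
    and good_involution_op_right: "\<lbrakk>x \<in> X; y \<in> X\<rbrakk> \<Longrightarrow> op x (\<rho> y) = rinv X op x y"
  using assms unfolding good_involution_def by blast+

lemma symmetric_quandle_imp_symmetric_rack:
  "symmetric_quandle X op \<rho> \<Longrightarrow> symmetric_rack X op \<rho>"
  by (simp add: symmetric_quandle_def symmetric_rack_def quandle_def)

lemma rinv_closed:
  assumes "rack X op" "x \<in> X" "y \<in> X"
  shows "rinv X op x y \<in> X"
  using rack_bij_right[OF assms(1,3)] assms(2) unfolding rinv_def
  by (metis bij_betw_def the_inv_into_into order_refl)

lemma rinv_cancel:
  assumes "rack X op" "x \<in> X" "y \<in> X"
  shows "op (rinv X op x y) y = x"
  using rack_bij_right[OF assms(1,3)] assms(2) unfolding rinv_def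
  by (rule f_the_inv_into_f_bij_betw)

lemma rinv_unique:
  assumes "rack X op" "r \<in> X" "y \<in> X" "op r y = x"
  shows "rinv X op x y = r"
  using rack_bij_right[OF assms(1,3)] assms(2,4) unfolding rinv_def
  by (simp add: bij_betw_def the_inv_into_f_eq)

lemma rack_image_bij_hom:
  assumes "rack Y opY" "bij_betw g Y E"
    and hom: "\<forall>a\<in>Y. \<forall>b\<in>Y. g (opY a b) = opE (g a) (g b)"
  shows "rack E opE"
proof -
  have E: "E = g ` Y" using assms(2) by (simp add: bij_betw_imp_surj_on)
  have "bij_betw (\<lambda>p. opE p (g b)) E E" if b: "b \<in> Y" for b
  proof -
    have "bij_betw (g \<circ> (\<lambda>a. opY a b)) Y E"
      using rack_bij_right[OF assms(1) b] assms(2) by (rule bij_betw_trans)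
    also have "?this \<longleftrightarrow> bij_betw ((\<lambda>p. opE p (g b)) \<circ> g) Y E"
      using hom b by (intro bij_betw_cong) simp
    finally show ?thesis using bij_betw_comp_iff[OF assms(2)] by blast
  qed
  moreover have "\<forall>p\<in>E. \<forall>q\<in>E. opE p q \<in> E"
    unfolding E using rack_closed[OF assms(1)] by (auto simp: hom[rule_format, symmetric])
  moreover have "opE (opE (g a) (g b)) (g c) = opE (opE (g a) (g c)) (opE (g b) (g c))"
    if "a \<in> Y" "b \<in> Y" "c \<in> Y" for a b c
    using that rack_self_distrib[OF assms(1) that]
    by (simp add: hom[rule_format, symmetric] rack_closed[OF assms(1)])
  ultimately show ?thesis
    unfolding rack_def by (simp add: E)
qed

lemma rinv_hom:
  assumes "rack Y opY" "rack E opE" "a \<in> Y" "b \<in> Y" "\<forall>a\<in>Y. g a \<in> E"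
    and hom: "\<forall>a\<in>Y. \<forall>b\<in>Y. g (opY a b) = opE (g a) (g b)"
  shows "rinv E opE (g a) (g b) = g (rinv Y opY a b)"
  using assms rinv_closed[OF assms(1,3,4)]
  by (intro rinv_unique) (auto simp flip: hom[rule_format] simp: rinv_cancel)

lemma symmetric_rack_iso_image:
  assumes "symmetric_rack Y opY \<rho>Y" "symmetric_iso Y opY \<rho>Y E opE \<rho>E g"
  shows "symmetric_rack E opE \<rho>E"
proof -
  have rY: "rack Y opY" and gY: "good_involution Y opY \<rho>Y"
    using assms(1) by (simp_all add: symmetric_rack_def)
  have bij: "bij_betw g Y E" and gE: "\<forall>a\<in>Y. g a \<in> E"
    and hom: "\<forall>a\<in>Y. \<forall>b\<in>Y. g (opY a b) = opE (g a) (g b)"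
    and hom_rho: "\<forall>a\<in>Y. g (\<rho>Y a) = \<rho>E (g a)"
    using assms(2) by (simp_all add: symmetric_iso_def symmetric_hom_def)
  have E: "E = g ` Y" using bij by (simp add: bij_betw_imp_surj_on)
  have rE: "rack E opE" using rY bij hom by (rule rack_image_bij_hom)
  have "good_involution E opE \<rho>E"
    unfolding good_involution_def E
    using good_involutionD[OF gY] hom hom_rho rack_closed[OF rY] rinv_closed[OF rY]
      rinv_hom[OF rY rE _ _ gE hom, unfolded E]
    by (auto simp flip: hom_rho[rule_format] hom[rule_format])
  with rE show ?thesis by (simp add: symmetric_rack_def)
qed

lemma symmetric_quandle_iso_image:
  assumes "symmetric_quandle Y opY \<rho>Y" "symmetric_iso Y opY \<rho>Y E opE \<rho>E g"
  shows "symmetric_quandle E opE \<rho>E"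
proof -
  have "symmetric_rack E opE \<rho>E"
    using symmetric_quandle_imp_symmetric_rack[OF assms(1)] assms(2)
    by (rule symmetric_rack_iso_image)
  moreover have "E = g ` Y" and "\<forall>a\<in>Y. g (opY a a) = opE (g a) (g a)"
    using assms(2) bij_betw_imp_surj_on by (auto simp: symmetric_iso_def symmetric_hom_def)
  moreover have "\<forall>a\<in>Y. opY a a = a"
    using assms(1) by (simp add: symmetric_quandle_def quandle_def)
  ultimately show ?thesis
    by (simp add: symmetric_quandle_def symmetric_rack_def quandle_def)
qed

lemma mem_ext_set [simp]: "(x, s) \<in> ext_set X S \<longleftrightarrow> x \<in> X \<and> s \<in> S x"
  by (simp add: ext_set_def)

lemma ext_op_Pair [simp]: "ext_op op \<alpha> (x, s) (y, t) = (op x y, \<alpha> x y s t)"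
  by (simp add: ext_op_def)

lemma ext_rho_Pair [simp]: "ext_rho \<rho> \<beta> (x, s) = (\<rho> x, \<beta> x s)"
  by (simp add: ext_rho_def)

lemma bij_betw_ext_alpha:
  assumes rX: "rack X op" and rE: "rack (ext_set X S) (ext_op op \<alpha>)"
    and x: "x \<in> X" and y: "y \<in> X" and t: "t \<in> S y"
  shows "bij_betw (\<lambda>s. \<alpha> x y s t) (S x) (S (op x y))"
proof -
  have bijE: "bij_betw (\<lambda>p. ext_op op \<alpha> p (y, t)) (ext_set X S) (ext_set X S)"
    using rack_bij_right[OF rE] y t by simp
  have injE: "inj_on (\<lambda>p. ext_op op \<alpha> p (y, t)) (ext_set X S)"
    using bijE by (simp add: bij_betw_def)
  have "inj_on (\<lambda>s. \<alpha> x y s t) (S x)"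
    using inj_onD[OF injE, of "(x, s)" "(x, s')" for s s'] x by (auto intro: inj_onI)
  moreover have "\<alpha> x y s t \<in> S (op x y)" if "s \<in> S x" for s
    using rack_closed[OF rE, of "(x, s)" "(y, t)"] that x y t by simp
  moreover have "u \<in> (\<lambda>s. \<alpha> x y s t) ` S x" if u: "u \<in> S (op x y)" for u
  proof -
    have "(op x y, u) \<in> (\<lambda>p. ext_op op \<alpha> p (y, t)) ` ext_set X S"
      using bij_betw_imp_surj_on[OF bijE] u rack_closed[OF rX x y] by simp
    then obtain x' s where "x' \<in> X" "s \<in> S x'" "op x' y = op x y" "\<alpha> x' y s t = u"
      by (auto simp: ext_set_def)
    moreover from this have "x' = x" using rack_right_cancel[OF rX _ x y] by blast
    ultimately show ?thesis by blast
  qed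
  ultimately show ?thesis by (auto simp: bij_betw_def)
qed

lemma rinv_ext_set:
  assumes rX: "rack X op" and rE: "rack (ext_set X S) (ext_op op \<alpha>)"
    and x: "x \<in> X" "s \<in> S x" and y: "y \<in> X" "t \<in> S y"
  defines "x' \<equiv> rinv X op x y"
  shows "rinv (ext_set X S) (ext_op op \<alpha>) (x, s) (y, t) =
    (x', the_inv_into (S x') (\<lambda>u. \<alpha> x' y u t) s)"
proof (rule rinv_unique[OF rE])
  have x': "x' \<in> X" "op x' y = x"
    unfolding x'_def using rinv_closed[OF rX] rinv_cancel[OF rX] x y by simp_all
  then have bij: "bij_betw (\<lambda>u. \<alpha> x' y u t) (S x') (S x)"
    using bij_betw_ext_alpha[OF rX rE x'(1) y] by simp
  show "(x', the_inv_into (S x') (\<lambda>u. \<alpha> x' y u t) s) \<in> ext_set X S"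
    using x'(1) bij_betwE[OF bij_betw_the_inv_into[OF bij]] x(2) by simp
  show "ext_op op \<alpha> (x', the_inv_into (S x') (\<lambda>u. \<alpha> x' y u t) s) (y, t) = (x, s)"
    using x'(2) f_the_inv_into_f_bij_betw[OF bij x(2)] by simp
  show "(y, t) \<in> ext_set X S" using y by simp
qed

lemma dynamical_cocycle_of_symmetric_rack_ext:
  assumes rX: "rack X op"
    and symE: "symmetric_rack (ext_set X S) (ext_op op \<alpha>) (ext_rho \<rho> \<beta>)"
  shows "dynamical_cocycle False X op \<rho> S \<alpha> \<beta>"
proof -
  have rE: "rack (ext_set X S) (ext_op op \<alpha>)"
    and gE: "good_involution (ext_set X S) (ext_op op \<alpha>) (ext_rho \<rho> \<beta>)"
    using symE by (simp_all add: symmetric_rack_def)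
  note closed = good_involution_closed[OF gE, of "(x, s)" for x s]
    and involutive = good_involution_involutive[OF gE, of "(x, s)" for x s]
    and op_left = good_involution_op_left[OF gE, of "(x, s)" "(y, t)" for x s y t]
    and op_right = good_involution_op_right[OF gE, of "(x, s)" "(y, t)" for x s y t]
    and distrib = rack_self_distrib[OF rE, of "(x, s)" "(y, t)" "(z, w)" for x s y t z w]
  show ?thesis
    unfolding dynamical_cocycle_def
    using closed involutive op_left op_right distrib bij_betw_ext_alpha[OF rX rE]
      rinv_ext_set[OF rX rE]
    by simp
qed

lemma dynamical_cocycle_of_symmetric_quandle_ext:
  assumes "rack X op"
    and symE: "symmetric_quandle (ext_set X S) (ext_op op \<alpha>) (ext_rho \<rho> \<beta>)"
  shows "dynamical_cocycle True X op \<rho> S \<alpha> \<beta>"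
proof -
  have "dynamical_cocycle False X op \<rho> S \<alpha> \<beta>"
    using assms(1) symmetric_quandle_imp_symmetric_rack[OF symE]
    by (rule dynamical_cocycle_of_symmetric_rack_ext)
  moreover have "\<alpha> x x s s = s" if "x \<in> X" "s \<in> S x" for x s
  proof -
    have "\<forall>p\<in>ext_set X S. ext_op op \<alpha> p p = p"
      using symE by (simp add: symmetric_quandle_def quandle_def)
    from this[rule_format, of "(x, s)"] that show ?thesis by simp
  qed
  ultimately show ?thesis by (simp add: dynamical_cocycle_def)
qed

lemma bij_betw_fibrewise_ext_set:
  assumes "\<forall>a\<in>Y. f a \<in> X" and \<mu>: "\<forall>x\<in>X. bij_betw (\<mu> x) {a \<in> Y. f a = x} (S x)"
  shows "bij_betw (\<lambda>a. (f a, \<mu> (f a) a)) Y (ext_set X S)"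
proof (rule bij_betw_imageI)
  show "inj_on (\<lambda>a. (f a, \<mu> (f a) a)) Y"
  proof (rule inj_onI)
    fix a b assume "a \<in> Y" "b \<in> Y" "(f a, \<mu> (f a) a) = (f b, \<mu> (f b) b)"
    moreover have "inj_on (\<mu> (f a)) {c \<in> Y. f c = f a}"
      using \<mu> assms(1) \<open>a \<in> Y\<close> by (simp add: bij_betw_def)
    ultimately show "a = b" by (auto dest: inj_onD)
  qed
  show "(\<lambda>a. (f a, \<mu> (f a) a)) ` Y = ext_set X S"
    using assms by (fastforce simp: ext_set_def bij_betw_def)
qed

lemma symmetric_iso_ext_of_bij:
  assumes hom: "symmetric_hom Y opY \<rho>Y X op \<rho> f"
    and bij: "bij_betw g Y (ext_set X S)" and fst_g: "\<And>a. fst (g a) = f a"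
  shows "\<exists>\<alpha> \<beta>. symmetric_iso Y opY \<rho>Y (ext_set X S) (ext_op op \<alpha>) (ext_rho \<rho> \<beta>) g"
proof -
  define h where "h = the_inv_into Y g"
  define \<alpha> where "\<alpha> x y s t = snd (g (opY (h (x, s)) (h (y, t))))" for x y s t
  define \<beta> where "\<beta> x s = snd (g (\<rho>Y (h (x, s))))" for x s
  have g_collapse: "(f a, snd (g a)) = g a" for a
    using fst_g by (metis prod.collapse)
  have h_g: "h (g a) = a" if "a \<in> Y" for a
    unfolding h_def using bij that by (simp add: bij_betw_def the_inv_into_f_f)
  have "g (opY a b) = ext_op op \<alpha> (g a) (g b)" if "a \<in> Y" "b \<in> Y" for a b
    using hom that
    by (intro prod_eqI) (simp_all add: symmetric_hom_def ext_op_def \<alpha>_def fst_g g_collapse h_g)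
  moreover have "g (\<rho>Y a) = ext_rho \<rho> \<beta> (g a)" if "a \<in> Y" for a
    using hom that
    by (intro prod_eqI) (simp_all add: symmetric_hom_def ext_rho_def \<beta>_def fst_g g_collapse h_g)
  ultimately have "symmetric_iso Y opY \<rho>Y (ext_set X S) (ext_op op \<alpha>) (ext_rho \<rho> \<beta>) g"
    using bij bij_betwE unfolding symmetric_iso_def symmetric_hom_def by blast
  then show ?thesis by blast
qed

theorem proposition5p1:
  fixes q :: bool
    and X :: "'a set" and op :: "'a \<Rightarrow> 'a \<Rightarrow> 'a" and \<rho> :: "'a \<Rightarrow> 'a"
    and Y :: "'b set" and opY :: "'b \<Rightarrow> 'b \<Rightarrow> 'b" and \<rho>Y :: "'b \<Rightarrow> 'b"
    and f :: "'b \<Rightarrow> 'a" and S :: "'a \<Rightarrow> 's set"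
  assumes symX: "if q then symmetric_quandle X op \<rho> else symmetric_rack X op \<rho>"
    and symY: "if q then symmetric_quandle Y opY \<rho>Y else symmetric_rack Y opY \<rho>Y"
    and hom: "symmetric_hom Y opY \<rho>Y X op \<rho> f"
    and surj: "f ` Y = X"
    and fib: "\<forall>x\<in>X. \<exists>\<mu>. bij_betw \<mu> {y \<in> Y. f y = x} (S x)"
  shows "\<exists>\<alpha> \<beta> g. dynamical_cocycle q X op \<rho> S \<alpha> \<beta> \<and>
           symmetric_iso Y opY \<rho>Y (ext_set X S) (ext_op op \<alpha>) (ext_rho \<rho> \<beta>) g"
proof -
  have rX: "rack X op"
    using symX by (auto simp: symmetric_quandle_def symmetric_rack_def quandle_def split: if_splits)
  from bchoice[OF fib] obtain \<mu> where "\<forall>x\<in>X. bij_betw (\<mu> x) {y \<in> Y. f y = x} (S x)" ..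
  then have "bij_betw (\<lambda>a. (f a, \<mu> (f a) a)) Y (ext_set X S)"
    using hom by (intro bij_betw_fibrewise_ext_set) (simp_all add: symmetric_hom_def)
  with hom obtain \<alpha> \<beta>
    where iso: "symmetric_iso Y opY \<rho>Y (ext_set X S) (ext_op op \<alpha>) (ext_rho \<rho> \<beta>)
                  (\<lambda>a. (f a, \<mu> (f a) a))"
    using symmetric_iso_ext_of_bij by fastforce
  have "dynamical_cocycle q X op \<rho> S \<alpha> \<beta>"
  proof (cases q)
    case True
    then show ?thesis
      using symY symmetric_quandle_iso_image[OF _ iso] dynamical_cocycle_of_symmetric_quandle_ext[OF rX]
      by simp
  next
    case False
    then show ?thesis
      using symY symmetric_rack_iso_image[OF _ iso] dynamical_cocycle_of_symmetric_rack_ext[OF rX]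
      by simp
  qed
  with iso show ?thesis by blast
qed

end
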